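(* Let $\Gamma$ be a finitely generated group. If there exists a finite generating set $X$ of $\Gamma$ and a generic subset $S\subset \mathbb F_X$ such that $\Gamma$ has solvable Equality Problem on $S\times S$, then $\Gamma$ has solvable Word Problem.
   Context: For a finite generating set $X$ of $\Gamma$, $\mathbb F_X$ is the free group on $X$ (elements are freely reduced words) and $\pi:\mathbb F_X\to\Gamma$ the canonical epimorphism. $|\omega|$ is the length of $\omega\in\mathbb F_X$, and $B_n=\{\omega\in\mathbb F_X:|\omega|\le n\}$. A set $S\subset\mathbb F_X$ is negligible if $\lim_{n\to\infty}|S\cap B_n|/|B_n|=0$, and generic if its complement is negligible. $\Gamma$ has solvable Word Problem on $S\subset\mathbb F_X$ if there is a partial algorithm that halts at least on every $\omega\in S$ and, whenever it halts on input $\omega$, correctly decides whether $\pi(\omega)$ is trivial; $\Gamma$ has solvable Word Problem if it has solvable Word Problem on $\mathbb F_X$. $\Gamma$ has solvable Equality Problem on $T\subset\mathbb F_X\times\mathbb F_X$ if there is a partial algorithm that halts at least on every $(\omega_1,\omega_2)\in T$ and, whenever it halts, correctly decides whether $\pi(\omega_1)=\pi(\omega_2)$. *)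

theory Defs
  imports "HOL-Algebra.Algebra" "HOL-Library.Nat_Bijection"
begin

datatype recf = RZero | RSucc | RProj nat | RComp recf "recf list" | RPrim recf recf | RMu recf

inductive recf_eval :: "recf \<Rightarrow> nat list \<Rightarrow> nat \<Rightarrow> bool" where
  zero: "recf_eval RZero xs 0"
| succ: "xs \<noteq> [] \<Longrightarrow> recf_eval RSucc xs (Suc (hd xs))"
| proj: "i < length xs \<Longrightarrow> recf_eval (RProj i) xs (xs ! i)"
| comp: "list_all2 (\<lambda>h y. recf_eval h xs y) hs ys \<Longrightarrow> recf_eval f ys z
          \<Longrightarrow> recf_eval (RComp f hs) xs z"
| prim0: "recf_eval f xs y \<Longrightarrow> recf_eval (RPrim f h) (0 # xs) y"
| primS: "recf_eval (RPrim f h) (k # xs) z \<Longrightarrow> recf_eval h (z # k # xs) y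
          \<Longrightarrow> recf_eval (RPrim f h) (Suc k # xs) y"
| mu: "recf_eval f (k # xs) 0 \<Longrightarrow> (\<forall>m<k. \<exists>y. recf_eval f (m # xs) y \<and> y \<noteq> 0)
          \<Longrightarrow> recf_eval (RMu f) xs k"

text \<open>A letter (b, i) stands for x_i if b = True and for x_i^(-1) if b = False.\<close>
type_synonym fword = "(bool \<times> nat) list"

definition freely_reduced :: "fword \<Rightarrow> bool" where
  "freely_reduced w \<longleftrightarrow>
     (\<forall>i. Suc i < length w \<longrightarrow>
        \<not> (snd (w ! i) = snd (w ! Suc i) \<and> fst (w ! i) \<noteq> fst (w ! Suc i)))"

definition free_words :: "nat \<Rightarrow> fword set" where
  "free_words n = {w. set (map snd w) \<subseteq> {..<n} \<and> freely_reduced w}"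

definition ball_words :: "nat \<Rightarrow> nat \<Rightarrow> fword set" where
  "ball_words n k = {w \<in> free_words n. length w \<le> k}"

definition negligible :: "nat \<Rightarrow> fword set \<Rightarrow> bool" where
  "negligible n S \<longleftrightarrow>
     (\<lambda>k. real (card (S \<inter> ball_words n k)) / real (card (ball_words n k))) \<longlonglongrightarrow> 0"

definition generic :: "nat \<Rightarrow> fword set \<Rightarrow> bool" where
  "generic n S \<longleftrightarrow> S \<subseteq> free_words n \<and> negligible n (free_words n - S)"

definition word_eval :: "('g, 'b) monoid_scheme \<Rightarrow> (nat \<Rightarrow> 'g) \<Rightarrow> fword \<Rightarrow> 'g" where
  "word_eval G g w =
     foldr (\<lambda>(b, i) acc. (if b then g i else inv\<^bsub>G\<^esub> (g i)) \<otimes>\<^bsub>G\<^esub> acc) w \<one>\<^bsub>G\<^esub>"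

definition fin_gen_set :: "('g, 'b) monoid_scheme \<Rightarrow> nat \<Rightarrow> (nat \<Rightarrow> 'g) \<Rightarrow> bool" where
  "fin_gen_set G n g \<longleftrightarrow> inj_on g {..<n} \<and> g ` {..<n} \<subseteq> carrier G
     \<and> generate G (g ` {..<n}) = carrier G"

definition word_code :: "fword \<Rightarrow> nat" where
  "word_code w = list_encode (map (\<lambda>(b, i). prod_encode (if b then 1 else 0, i)) w)"

definition WP_solvable_on :: "('g, 'b) monoid_scheme \<Rightarrow> nat \<Rightarrow> (nat \<Rightarrow> 'g) \<Rightarrow> fword set \<Rightarrow> bool" where
  "WP_solvable_on G n g S \<longleftrightarrow>
     (\<exists>f. (\<forall>w\<in>S. \<exists>y. recf_eval f [word_code w] y)
        \<and> (\<forall>w\<in>free_words n. \<forall>y. recf_eval f [word_code w] y \<longrightarrow>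
              (y = 0 \<longleftrightarrow> word_eval G g w = \<one>\<^bsub>G\<^esub>)))"

definition EP_solvable_on ::
  "('g, 'b) monoid_scheme \<Rightarrow> nat \<Rightarrow> (nat \<Rightarrow> 'g) \<Rightarrow> (fword \<times> fword) set \<Rightarrow> bool" where
  "EP_solvable_on G n g T \<longleftrightarrow>
     (\<exists>f. (\<forall>(w1, w2)\<in>T. \<exists>y. recf_eval f [word_code w1, word_code w2] y)
        \<and> (\<forall>w1\<in>free_words n. \<forall>w2\<in>free_words n. \<forall>y.
              recf_eval f [word_code w1, word_code w2] y \<longrightarrow>
              (y = 0 \<longleftrightarrow> word_eval G g w1 = word_eval G g w2)))"

end

theory Submission
  imports Defs
begin

text \<open>
  For a reduced word \<open>w\<close>, a generic set \<open>S\<close> contains some \<open>u\<close> with \<open>w u \<in> S\<close>: at least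
  half of the words of each length extend \<open>w\<close> without cancellation, while the complement of
  \<open>S\<close> is negligible and multiplying by \<open>w\<close> changes lengths only boundedly.  Since
  \<open>\<pi>(w) = 1\<close> iff \<open>\<pi>(w u) = \<pi>(u)\<close>, and the Equality Problem algorithm halts on \<open>(w u, u)\<close>, the
  Word Problem is solved by dovetailing: search for a pair \<open>(u, t)\<close> such that \<open>w u\<close> is
  reduced and the Equality Problem algorithm halts on \<open>(w u, u)\<close> within \<open>t\<close> steps, and
  return its answer; any such \<open>u\<close> gives the correct answer.  Running a partial recursive
  function for \<open>t\<close> steps is made precise by a translation \<open>clocked\<close> of partial recursive
  terms into total ones.
\<close>

section \<open>Partial recursive terms and the total functions they compute\<close>

lemma recf_eval_RMu_iff:
  "recf_eval (RMu f) xs k \<longleftrightarrow> recf_eval f (k # xs) 0 \<and> (\<forall>m<k. \<exists>y. recf_eval f (m # xs) y \<and> y \<noteq> 0)"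
proof
  assume "recf_eval (RMu f) xs k"
  then show "recf_eval f (k # xs) 0 \<and> (\<forall>m<k. \<exists>y. recf_eval f (m # xs) y \<and> y \<noteq> 0)"
    by (cases rule: recf_eval.cases) auto
qed (blast intro: recf_eval.mu)

lemma recf_eval_RZero_iff: "recf_eval RZero xs y \<longleftrightarrow> y = 0"
  by (auto elim: recf_eval.cases intro: recf_eval.zero)

lemma recf_eval_RSucc_iff: "recf_eval RSucc xs y \<longleftrightarrow> xs \<noteq> [] \<and> y = Suc (xs ! 0)"
  using recf_eval.succ[of xs] by (auto elim: recf_eval.cases simp: hd_conv_nth)

lemma recf_eval_RProj_iff: "recf_eval (RProj i) xs y \<longleftrightarrow> i < length xs \<and> y = xs ! i"
  by (auto elim: recf_eval.cases intro: recf_eval.proj)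

lemma recf_eval_RComp_iff:
  "recf_eval (RComp f hs) xs z \<longleftrightarrow> (\<exists>ys. list_all2 (\<lambda>h. recf_eval h xs) hs ys \<and> recf_eval f ys z)"
proof
  assume "recf_eval (RComp f hs) xs z"
  then show "\<exists>ys. list_all2 (\<lambda>h. recf_eval h xs) hs ys \<and> recf_eval f ys z"
    by (cases rule: recf_eval.cases) auto
qed (blast intro: recf_eval.comp)

lemma recf_eval_RPrim_Nil: "\<not> recf_eval (RPrim f h) [] y"
  by (auto elim: recf_eval.cases)

lemma recf_eval_RPrim_0_iff: "recf_eval (RPrim f h) (0 # xs) y \<longleftrightarrow> recf_eval f xs y"
proof
  assume "recf_eval (RPrim f h) (0 # xs) y"
  then show "recf_eval f xs y" by (cases rule: recf_eval.cases) auto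
qed (rule recf_eval.prim0)

lemma recf_eval_RPrim_Suc_iff:
  "recf_eval (RPrim f h) (Suc k # xs) y \<longleftrightarrow>
     (\<exists>z. recf_eval (RPrim f h) (k # xs) z \<and> recf_eval h (z # k # xs) y)"
proof
  assume "recf_eval (RPrim f h) (Suc k # xs) y"
  then show "\<exists>z. recf_eval (RPrim f h) (k # xs) z \<and> recf_eval h (z # k # xs) y"
    by (cases rule: recf_eval.cases) auto
qed (blast intro: recf_eval.primS)

lemma list_all2_functional:
  "list_all2 (\<lambda>h y. P h y \<and> (\<forall>y'. P h y' \<longrightarrow> y = y')) hs ys \<Longrightarrow> list_all2 P hs ys' \<Longrightarrow> ys = ys'"
proof (induction hs arbitrary: ys ys')
  case (Cons h hs)
  then show ?case by (auto simp: list_all2_Cons1)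
qed simp

lemma recf_eval_functional: "recf_eval f xs y \<Longrightarrow> recf_eval f xs y' \<Longrightarrow> y = y'"
proof (induction arbitrary: y' rule: recf_eval.induct)
  case (comp xs hs ys f z)
  then obtain ys' where "list_all2 (\<lambda>h. recf_eval h xs) hs ys'" and "recf_eval f ys' y'"
    by (auto simp: recf_eval_RComp_iff)
  with comp.IH(2) list_all2_functional[OF comp.IH(1)] show ?case by simp
next
  case (primS f h k xs z y)
  then show ?case by (metis recf_eval_RPrim_Suc_iff)
next
  case (mu f k xs)
  then have halt: "recf_eval f (y' # xs) 0" and below: "\<forall>m<y'. \<exists>y. recf_eval f (m # xs) y \<and> y \<noteq> 0"
    by (simp_all add: recf_eval_RMu_iff)
  show ?case
  proof (rule linorder_cases[of k y'])
    assume "k < y'"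
    with below mu.IH show ?thesis by blast
  next
    assume "y' < k"
    with halt mu.IH show ?thesis by blast
  qed
qed (simp_all add: recf_eval_RZero_iff recf_eval_RSucc_iff recf_eval_RProj_iff recf_eval_RPrim_0_iff
    hd_conv_nth)

definition computes :: "recf \<Rightarrow> nat \<Rightarrow> (nat list \<Rightarrow> nat) \<Rightarrow> bool" where
  "computes h a F \<longleftrightarrow> (\<forall>xs. length xs = a \<longrightarrow> recf_eval h xs (F xs))"

lemma computesD: "computes h a F \<Longrightarrow> length xs = a \<Longrightarrow> recf_eval h xs (F xs)"
  by (simp add: computes_def)

lemma computes_unique: "computes h a F \<Longrightarrow> length xs = a \<Longrightarrow> recf_eval h xs y \<Longrightarrow> y = F xs"
  using recf_eval_functional computesD by metis

lemma computes_cong: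
  "computes h a F \<Longrightarrow> a = b \<Longrightarrow> (\<And>xs. length xs = b \<Longrightarrow> G xs = F xs) \<Longrightarrow> computes h b G"
  by (simp add: computes_def)

lemma recf_eval_RMu_computes_iff:
  assumes "computes h a H" and "a = Suc (length xs)"
  shows "recf_eval (RMu h) xs k \<longleftrightarrow> H (k # xs) = 0 \<and> (\<forall>m<k. H (m # xs) \<noteq> 0)"
  using assms computes_unique[OF assms(1)] unfolding recf_eval_RMu_iff
  by (metis computesD length_Cons)

fun prim_rec :: "(nat list \<Rightarrow> nat) \<Rightarrow> (nat list \<Rightarrow> nat) \<Rightarrow> nat \<Rightarrow> nat list \<Rightarrow> nat" where
  "prim_rec F H 0 ys = F ys"
| "prim_rec F H (Suc k) ys = H (prim_rec F H k ys # k # ys)"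

named_theorems computesI

lemma computes_zero [computesI]: "computes RZero a (\<lambda>_. 0)"
  by (simp add: computes_def recf_eval.zero)

lemma computes_proj [computesI]: "i < a \<Longrightarrow> computes (RProj i) a (\<lambda>xs. xs ! i)"
  by (simp add: computes_def recf_eval.proj)

lemma computes_succ [computesI]: "computes RSucc 1 (\<lambda>xs. Suc (xs ! 0))"
  by (auto simp: computes_def length_Suc_conv intro: recf_eval.succ[of "[_]", simplified])

lemma computes_comp [computesI]:
  assumes "computes f m F0" "list_all2 (\<lambda>h H. computes h a H) hs Hs" "length hs = m"
    "\<And>xs. length xs = a \<Longrightarrow> F xs = F0 (map (\<lambda>H. H xs) Hs)"
  shows "computes (RComp f hs) a F"
  unfolding computes_def
proof (intro allI impI)
  fix xs :: "nat list" assume "length xs = a"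
  moreover from this assms(2) have "list_all2 (\<lambda>h. recf_eval h xs) hs (map (\<lambda>H. H xs) Hs)"
    by (auto simp: list_all2_conv_all_nth computes_def)
  moreover have "length Hs = m" using assms(2,3) by (simp add: list_all2_lengthD)
  ultimately show "recf_eval (RComp f hs) xs (F xs)"
    using assms(1,4) by (auto simp: computes_def intro!: recf_eval.comp)
qed

lemmas [computesI] = list_all2_Nil[THEN iffD2] list_all2_Cons[THEN iffD2, OF conjI]

lemma computes_projs:
  "(\<And>i. i \<in> set is \<Longrightarrow> i < a) \<Longrightarrow> list_all2 (\<lambda>h H. computes h a H) (map RProj is) (map (\<lambda>i xs. xs ! i) is)"
  by (auto simp: list_all2_conv_all_nth intro: computes_proj)

lemma map_nth_upt: "length xs = n \<Longrightarrow> map (\<lambda>i. xs ! i) [0..<n] = xs"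
  by (rule nth_equalityI) auto

lemma tl_conv_map_nth: "tl xs = map (\<lambda>i. xs ! i) [1..<length xs]"
  by (rule nth_equalityI) (auto simp: nth_tl)

lemma computes_map:
  "(\<And>h. h \<in> set hs \<Longrightarrow> computes (f h) a (F h)) \<Longrightarrow> list_all2 (\<lambda>h H. computes h a H) (map f hs) (map F hs)"
  by (auto simp: list_all2_conv_all_nth)

lemma computes_prim:
  assumes "computes f a F" "computes h (Suc (Suc a)) H"
  shows "computes (RPrim f h) (Suc a) (\<lambda>xs. prim_rec F H (hd xs) (tl xs))"
  unfolding computes_def
proof (intro allI impI)
  fix xs :: "nat list" assume "length xs = Suc a"
  then obtain k ys where xs: "xs = k # ys" and ys: "length ys = a" by (cases xs) auto
  have "recf_eval (RPrim f h) (k # ys) (prim_rec F H k ys)"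
    using assms ys by (induction k) (auto simp: computes_def intro: recf_eval.prim0 recf_eval.primS)
  then show "recf_eval (RPrim f h) xs (prim_rec F H (hd xs) (tl xs))" by (simp add: xs)
qed

lemma computes_prim_rec_eqs:
  assumes "computes f a F" and "computes h (Suc (Suc a)) H" and "b = Suc a"
    and "\<And>ys. length ys = a \<Longrightarrow> P (0 # ys) = F ys"
    and "\<And>k ys. length ys = a \<Longrightarrow> P (Suc k # ys) = H (P (k # ys) # k # ys)"
  shows "computes (RPrim f h) b P"
proof (rule computes_cong[OF computes_prim[OF assms(1,2)]])
  have "P (k # ys) = prim_rec F H k ys" if "length ys = a" for k ys
    using that assms(4,5) by (induction k) auto
  then show "P xs = prim_rec F H (hd xs) (tl xs)" if "length xs = b" for xs
    using that assms(3) by (auto simp: length_Suc_conv)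
qed (use assms(3) in simp)

section \<open>Primitive recursive arithmetic\<close>

definition r_one :: recf where
  "r_one = RComp RSucc [RZero]"

lemma computes_one [computesI]: "computes r_one a (\<lambda>_. 1)"
  unfolding r_one_def by (rule computesI | simp)+

fun r_const :: "nat \<Rightarrow> recf" where
  "r_const 0 = RZero"
| "r_const (Suc k) = RComp RSucc [r_const k]"

lemma computes_const [computesI]: "computes (r_const k) a (\<lambda>_. k)"
  by (induction k) (simp, (rule computesI | simp)+)

definition r_add :: recf where
  "r_add = RPrim (RProj 0) (RComp RSucc [RProj 0])"

lemma computes_add [computesI]: "computes r_add 2 (\<lambda>xs. xs ! 0 + xs ! 1)"
  unfolding r_add_def
  by (rule computes_prim_rec_eqs[where a=1]) (rule computesI | simp)+

definition r_pred :: recf where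
  "r_pred = RPrim RZero (RProj 1)"

lemma computes_pred [computesI]: "computes r_pred 1 (\<lambda>xs. xs ! 0 - 1)"
  unfolding r_pred_def
  by (rule computes_prim_rec_eqs[where a=0]) (rule computesI | simp)+

definition r_sub_rev :: recf where
  "r_sub_rev = RPrim (RProj 0) (RComp r_pred [RProj 0])"

definition r_sub :: recf where
  "r_sub = RComp r_sub_rev [RProj 1, RProj 0]"

lemma computes_sub [computesI]: "computes r_sub 2 (\<lambda>xs. xs ! 0 - xs ! 1)"
proof -
  have sub_rev: "computes r_sub_rev 2 (\<lambda>xs. xs ! 1 - xs ! 0)"
    unfolding r_sub_rev_def
    by (rule computes_prim_rec_eqs[where a=1]) (rule computesI | simp)+
  show ?thesis
    unfolding r_sub_def by (rule computesI sub_rev | simp)+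
qed

definition r_mul :: recf where
  "r_mul = RPrim RZero (RComp r_add [RProj 0, RProj 2])"

lemma computes_mul [computesI]: "computes r_mul 2 (\<lambda>xs. xs ! 0 * xs ! 1)"
  unfolding r_mul_def
  by (rule computes_prim_rec_eqs[where a=1]) (rule computesI | simp)+

definition r_sgn :: recf where
  "r_sgn = RPrim RZero r_one"

lemma computes_sgn [computesI]: "computes r_sgn 1 (\<lambda>xs. if xs ! 0 = 0 then 0 else 1)"
  unfolding r_sgn_def
  by (rule computes_prim_rec_eqs[where a=0]) (rule computesI | simp)+

definition r_is_zero :: recf where
  "r_is_zero = RPrim r_one RZero"

lemma computes_is_zero [computesI]: "computes r_is_zero 1 (\<lambda>xs. if xs ! 0 = 0 then 1 else 0)"
  unfolding r_is_zero_def
  by (rule computes_prim_rec_eqs[where a=0]) (rule computesI | simp)+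

definition r_eq :: recf where
  "r_eq = RComp r_is_zero [RComp r_add [r_sub, RComp r_sub [RProj 1, RProj 0]]]"

lemma computes_eq [computesI]: "computes r_eq 2 (\<lambda>xs. if xs ! 0 = xs ! 1 then 1 else 0)"
  unfolding r_eq_def by (rule computesI | simp)+

definition r_le :: recf where
  "r_le = RComp r_is_zero [r_sub]"

lemma computes_le [computesI]: "computes r_le 2 (\<lambda>xs. if xs ! 0 \<le> xs ! 1 then 1 else 0)"
  unfolding r_le_def by (rule computesI | simp)+

definition r_lt :: recf where
  "r_lt = RComp r_sgn [RComp r_sub [RProj 1, RProj 0]]"

lemma computes_lt [computesI]: "computes r_lt 2 (\<lambda>xs. if xs ! 0 < xs ! 1 then 1 else 0)"
  unfolding r_lt_def by (rule computesI | simp)+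

section \<open>Clocked evaluation\<close>

text \<open>Clock values: \<open>F (xs @ [t]) = Suc y\<close> certifies that \<open>f\<close> halts on \<open>xs\<close> with output \<open>y\<close>,
  and \<open>0\<close> means that no halting has been observed within time \<open>t\<close>.\<close>
definition clock_for :: "recf \<Rightarrow> nat \<Rightarrow> (nat list \<Rightarrow> nat) \<Rightarrow> bool" where
  "clock_for f a F \<longleftrightarrow>
     (\<forall>xs t. length xs = a \<longrightarrow> F (xs @ [t]) \<noteq> 0 \<longrightarrow> recf_eval f xs (F (xs @ [t]) - 1)) \<and>
     (\<forall>xs y. length xs = a \<longrightarrow> recf_eval f xs y \<longrightarrow> (\<forall>\<^sub>F t in sequentially. F (xs @ [t]) = Suc y))"

lemma clock_forI:
  assumes "\<And>xs t. length xs = a \<Longrightarrow> F (xs @ [t]) \<noteq> 0 \<Longrightarrow> recf_eval f xs (F (xs @ [t]) - 1)"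
    and "\<And>xs y. length xs = a \<Longrightarrow> recf_eval f xs y \<Longrightarrow> \<forall>\<^sub>F t in sequentially. F (xs @ [t]) = Suc y"
  shows "clock_for f a F"
  using assms by (simp add: clock_for_def)

lemma clock_for_sound:
  "clock_for f a F \<Longrightarrow> length xs = a \<Longrightarrow> F (xs @ [t]) \<noteq> 0 \<Longrightarrow> recf_eval f xs (F (xs @ [t]) - 1)"
  by (simp add: clock_for_def)

lemma clock_for_complete:
  "clock_for f a F \<Longrightarrow> length xs = a \<Longrightarrow> recf_eval f xs y \<Longrightarrow> \<forall>\<^sub>F t in sequentially. F (xs @ [t]) = Suc y"
  by (simp add: clock_for_def)

lemma clock_for_diverging:
  "(\<And>xs y. length xs = a \<Longrightarrow> \<not> recf_eval f xs y) \<Longrightarrow> clock_for f a (\<lambda>_. 0)"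
  by (auto intro: clock_forI)

lemma clock_for_total:
  assumes "\<And>xs. length xs = a \<Longrightarrow> recf_eval f xs (G xs)"
    and "\<And>xs t. length xs = a \<Longrightarrow> F (xs @ [t]) = Suc (G xs)"
  shows "clock_for f a F"
proof (rule clock_forI)
  fix xs y assume "length xs = a" and "recf_eval f xs y"
  moreover from this have "y = G xs"
    using assms(1) recf_eval_functional by blast
  ultimately show "\<forall>\<^sub>F t in sequentially. F (xs @ [t]) = Suc y"
    using assms(2) by simp
qed (use assms in simp)

definition comp_clock ::
  "(nat list \<Rightarrow> nat) \<Rightarrow> (recf \<Rightarrow> nat list \<Rightarrow> nat) \<Rightarrow> recf list \<Rightarrow> nat \<Rightarrow> nat list \<Rightarrow> nat" where
  "comp_clock Ff Fh hs a zs =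
     (if \<forall>h\<in>set hs. Fh h zs \<noteq> 0 then Ff (map (\<lambda>h. Fh h zs - 1) hs @ [zs ! a]) else 0)"

lemma clock_for_RComp:
  assumes f: "clock_for f (length hs) Ff" and hs: "\<And>h. h \<in> set hs \<Longrightarrow> clock_for h a (Fh h)"
  shows "clock_for (RComp f hs) a (comp_clock Ff Fh hs a)"
proof (rule clock_forI)
  fix xs t assume xs: "length xs = a" and "comp_clock Ff Fh hs a (xs @ [t]) \<noteq> 0"
  then have halted: "\<forall>h\<in>set hs. Fh h (xs @ [t]) \<noteq> 0"
    and result: "comp_clock Ff Fh hs a (xs @ [t]) = Ff (map (\<lambda>h. Fh h (xs @ [t]) - 1) hs @ [t])"
    by (auto simp: comp_clock_def nth_append split: if_splits)
  have "list_all2 (\<lambda>h. recf_eval h xs) hs (map (\<lambda>h. Fh h (xs @ [t]) - 1) hs)"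
    unfolding list_all2_map2 list_all2_same
  proof
    fix h assume "h \<in> set hs"
    with halted xs show "recf_eval h xs (Fh h (xs @ [t]) - 1)"
      by (intro clock_for_sound[OF hs]) auto
  qed
  with \<open>comp_clock Ff Fh hs a (xs @ [t]) \<noteq> 0\<close> show "recf_eval (RComp f hs) xs (comp_clock Ff Fh hs a (xs @ [t]) - 1)"
    unfolding result using clock_for_sound[OF f] by (auto intro: recf_eval.comp)
next
  fix xs y assume xs: "length xs = a" and "recf_eval (RComp f hs) xs y"
  then obtain ys where hs_ys: "list_all2 (\<lambda>h. recf_eval h xs) hs ys" and f_ys: "recf_eval f ys y"
    unfolding recf_eval_RComp_iff by blast
  have "\<forall>\<^sub>F t in sequentially. \<forall>i\<in>{..<length hs}. Fh (hs ! i) (xs @ [t]) = Suc (ys ! i)"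
    using hs_ys xs by (intro eventually_ball_finite)
      (auto simp: list_all2_conv_all_nth intro!: clock_for_complete[OF hs])
  moreover have "\<forall>\<^sub>F t in sequentially. Ff (ys @ [t]) = Suc y"
    using clock_for_complete[OF f _ f_ys] hs_ys by (simp add: list_all2_lengthD)
  ultimately show "\<forall>\<^sub>F t in sequentially. comp_clock Ff Fh hs a (xs @ [t]) = Suc y"
  proof eventually_elim
    case (elim t)
    then have "\<forall>h\<in>set hs. Fh h (xs @ [t]) \<noteq> 0"
      by (auto simp: in_set_conv_nth)
    moreover from elim(1) have "map (\<lambda>h. Fh h (xs @ [t]) - 1) hs = ys"
      using hs_ys by (auto simp: list_all2_conv_all_nth intro: nth_equalityI)
    ultimately show ?case
      using elim(2) xs by (simp add: comp_clock_def nth_append)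
  qed
qed

definition prim_clock_step :: "(nat list \<Rightarrow> nat) \<Rightarrow> nat list \<Rightarrow> nat" where
  "prim_clock_step Fh zs = (if zs ! 0 = 0 then 0 else Fh ((zs ! 0 - 1) # tl zs))"

lemma prim_clock_step_Cons [simp]:
  "prim_clock_step Fh (z # zs) = (if z = 0 then 0 else Fh ((z - 1) # zs))"
  by (simp add: prim_clock_step_def)

lemma prim_rec_clock_sound:
  assumes f: "clock_for f a Ff" and h: "clock_for h (Suc (Suc a)) Fh" and xs: "length xs = a"
  shows "prim_rec Ff (prim_clock_step Fh) k (xs @ [t]) \<noteq> 0 \<Longrightarrow>
    recf_eval (RPrim f h) (k # xs) (prim_rec Ff (prim_clock_step Fh) k (xs @ [t]) - 1)"
proof (induction k)
  case 0
  then show ?case using clock_for_sound[OF f xs] by (simp add: recf_eval_RPrim_0_iff)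
next
  case (Suc k)
  let ?z = "prim_rec Ff (prim_clock_step Fh) k (xs @ [t])"
  from Suc.prems have "?z \<noteq> 0" and "Fh (((?z - 1) # k # xs) @ [t]) \<noteq> 0"
    and "prim_rec Ff (prim_clock_step Fh) (Suc k) (xs @ [t]) = Fh (((?z - 1) # k # xs) @ [t])"
    by (auto split: if_splits)
  with Suc.IH clock_for_sound[OF h, of "(?z - 1) # k # xs"] xs show ?case
    by (auto simp: recf_eval_RPrim_Suc_iff)
qed

lemma prim_rec_clock_complete:
  assumes f: "clock_for f a Ff" and h: "clock_for h (Suc (Suc a)) Fh" and xs: "length xs = a"
  shows "recf_eval (RPrim f h) (k # xs) y \<Longrightarrow>
    \<forall>\<^sub>F t in sequentially. prim_rec Ff (prim_clock_step Fh) k (xs @ [t]) = Suc y"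
proof (induction k arbitrary: y)
  case 0
  then show ?case using clock_for_complete[OF f xs] by (simp add: recf_eval_RPrim_0_iff)
next
  case (Suc k)
  then obtain z where z: "recf_eval (RPrim f h) (k # xs) z" and hz: "recf_eval h (z # k # xs) y"
    by (auto simp: recf_eval_RPrim_Suc_iff)
  have "length (z # k # xs) = Suc (Suc a)" using xs by simp
  from Suc.IH[OF z] clock_for_complete[OF h this hz] show ?case
    by eventually_elim simp
qed

lemma clock_for_RPrim:
  assumes f: "clock_for f a Ff" and h: "clock_for h (Suc (Suc a)) Fh"
  shows "clock_for (RPrim f h) (Suc a) (\<lambda>zs. prim_rec Ff (prim_clock_step Fh) (hd zs) (tl zs))"
proof (rule clock_forI)
  fix xs :: "nat list" and t assume "length xs = Suc a"
  then show "prim_rec Ff (prim_clock_step Fh) (hd (xs @ [t])) (tl (xs @ [t])) \<noteq> 0 \<Longrightarrow>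
    recf_eval (RPrim f h) xs (prim_rec Ff (prim_clock_step Fh) (hd (xs @ [t])) (tl (xs @ [t])) - 1)"
    using prim_rec_clock_sound[OF f h] by (cases xs) auto
next
  fix xs :: "nat list" and y assume "length xs = Suc a" and "recf_eval (RPrim f h) xs y"
  then show "\<forall>\<^sub>F t in sequentially. prim_rec Ff (prim_clock_step Fh) (hd (xs @ [t])) (tl (xs @ [t])) = Suc y"
    using prim_rec_clock_complete[OF f h] by (cases xs) auto
qed

text \<open>\<open>mu_scan q J\<close> runs the search of \<^const>\<open>RMu\<close> over \<open>j < J\<close>, where \<open>q j\<close> is a clock value
  of the searched function at \<open>j\<close> (\<open>1\<close> certifying the value \<open>0\<close>).  The result is \<open>k + 2\<close> if \<open>k\<close> is
  found as the least zero, \<open>1\<close> if the search reaches a computation that has not halted yet, and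
  \<open>0\<close> if all \<open>j < J\<close> have halted with nonzero values.\<close>
fun mu_scan :: "(nat \<Rightarrow> nat) \<Rightarrow> nat \<Rightarrow> nat" where
  "mu_scan q 0 = 0"
| "mu_scan q (Suc j) =
    (if mu_scan q j \<noteq> 0 then mu_scan q j else if q j = 0 then 1 else if q j = 1 then j + 2 else 0)"

lemma mu_scan_eq_0: "mu_scan q j = 0 \<Longrightarrow> i < j \<Longrightarrow> 2 \<le> q i"
proof (induction j)
  case (Suc j)
  then show ?case by (cases "mu_scan q j = 0"; cases "i = j") (auto split: if_splits)
qed simp

lemma mu_scan_found:
  "2 \<le> mu_scan q j \<Longrightarrow> q (mu_scan q j - 2) = 1 \<and> (\<forall>i < mu_scan q j - 2. 2 \<le> q i)"
proof (induction j)
  case (Suc j)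
  show ?case
  proof (cases "mu_scan q j = 0")
    case True
    with Suc.prems mu_scan_eq_0[OF True] show ?thesis by (auto split: if_splits)
  qed (use Suc in simp)
qed simp

lemma mu_scan_hit: "(\<forall>i<k. 2 \<le> q i) \<Longrightarrow> q k = 1 \<Longrightarrow> k < j \<Longrightarrow> mu_scan q j = k + 2"
proof (induction j)
  case (Suc j)
  moreover have "mu_scan q k = 0"
    using Suc.prems(1) by (induction k) auto
  ultimately show ?case by (cases "k < j") (auto simp: less_Suc_eq)
qed simp

lemma mu_scan_clock_sound:
  assumes f: "clock_for f (Suc a) Ff" and xs: "length xs = a"
    and found: "2 \<le> mu_scan (\<lambda>j. Ff (j # xs @ [t])) J"
  shows "recf_eval (RMu f) xs (mu_scan (\<lambda>j. Ff (j # xs @ [t])) J - 2)"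
proof -
  define q where "q j = Ff (j # xs @ [t])" for j
  define k where "k = mu_scan q J - 2"
  from found mu_scan_found[of q J] have zero: "q k = 1" and below: "\<forall>i<k. 2 \<le> q i"
    by (auto simp: k_def q_def[abs_def])
  have sound: "recf_eval f (j # xs) (q j - 1)" if "q j \<noteq> 0" for j
    using clock_for_sound[OF f, of "j # xs"] that xs by (simp add: q_def)
  have "recf_eval (RMu f) xs k"
    unfolding recf_eval_RMu_iff
  proof
    show "recf_eval f (k # xs) 0" using sound[of k] zero by simp
    show "\<forall>m<k. \<exists>y. recf_eval f (m # xs) y \<and> y \<noteq> 0"
    proof (intro allI impI)
      fix m assume "m < k"
      with below sound[of m] show "\<exists>y. recf_eval f (m # xs) y \<and> y \<noteq> 0" by fastforce
    qed
  qed
  then show ?thesis by (simp add: k_def q_def[abs_def])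
qed

lemma mu_scan_clock_complete:
  assumes f: "clock_for f (Suc a) Ff" and xs: "length xs = a" and "recf_eval (RMu f) xs k"
  shows "\<forall>\<^sub>F t in sequentially. mu_scan (\<lambda>j. Ff (j # xs @ [t])) (Suc t) = k + 2"
proof -
  from \<open>recf_eval (RMu f) xs k\<close> have zero: "recf_eval f (k # xs) 0"
    and below: "\<forall>m<k. \<exists>y. recf_eval f (m # xs) y \<and> y \<noteq> 0"
    by (auto simp: recf_eval_RMu_iff)
  have "\<forall>\<^sub>F t in sequentially. \<forall>i\<in>{..k}.
      (i < k \<longrightarrow> 2 \<le> Ff (i # xs @ [t])) \<and> (i = k \<longrightarrow> Ff (i # xs @ [t]) = 1)"
  proof (rule eventually_ball_finite[OF finite_atMost], rule ballI)
    fix i assume "i \<in> {..k}"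
    then consider "i = k" | y where "i < k" "recf_eval f (i # xs) y" "y \<noteq> 0"
      using below by (metis atMost_iff le_neq_implies_less)
    then show "\<forall>\<^sub>F t in sequentially.
      (i < k \<longrightarrow> 2 \<le> Ff (i # xs @ [t])) \<and> (i = k \<longrightarrow> Ff (i # xs @ [t]) = 1)"
    proof cases
      case 1
      with clock_for_complete[OF f _ zero] xs show ?thesis by (auto elim: eventually_mono)
    next
      case (2 y)
      with clock_for_complete[OF f, of "i # xs" y] xs show ?thesis by (auto elim: eventually_mono)
    qed
  qed
  with eventually_ge_at_top[of k] show ?thesis
    by eventually_elim (intro mu_scan_hit, auto)
qed

definition mu_clock :: "(nat list \<Rightarrow> nat) \<Rightarrow> nat \<Rightarrow> nat list \<Rightarrow> nat" where
  "mu_clock Ff a zs = mu_scan (\<lambda>j. Ff (j # zs)) (Suc (zs ! a)) - 1"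

lemma clock_for_RMu:
  assumes f: "clock_for f (Suc a) Ff"
  shows "clock_for (RMu f) a (mu_clock Ff a)"
proof (rule clock_forI)
  fix xs :: "nat list" and t assume "length xs = a" and "mu_clock Ff a (xs @ [t]) \<noteq> 0"
  with mu_scan_clock_sound[OF f, of xs t "Suc t"]
  show "recf_eval (RMu f) xs (mu_clock Ff a (xs @ [t]) - 1)"
    by (simp add: mu_clock_def nth_append numeral_2_eq_2 del: mu_scan.simps)
next
  fix xs :: "nat list" and k assume xs: "length xs = a" and "recf_eval (RMu f) xs k"
  from mu_scan_clock_complete[OF f this]
  show "\<forall>\<^sub>F t in sequentially. mu_clock Ff a (xs @ [t]) = Suc k"
    by eventually_elim (simp add: mu_clock_def nth_append xs[symmetric] del: mu_scan.simps)
qed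

definition r_guard :: "recf \<Rightarrow> recf \<Rightarrow> recf" where
  "r_guard g x = RComp r_mul [RComp r_sgn [g], x]"

lemma computes_guard:
  "computes g a Fg \<Longrightarrow> computes x a Fx \<Longrightarrow> computes (r_guard g x) a (\<lambda>xs. if Fg xs = 0 then 0 else Fx xs)"
  unfolding r_guard_def by (rule computesI | assumption | simp)+

fun r_guards :: "recf list \<Rightarrow> recf \<Rightarrow> recf" where
  "r_guards [] x = x"
| "r_guards (g # gs) x = r_guard g (r_guards gs x)"

lemma computes_guards:
  "list_all2 (\<lambda>g Fg. computes g a Fg) gs Fgs \<Longrightarrow> computes x a Fx \<Longrightarrow>
   computes (r_guards gs x) a (\<lambda>xs. if \<forall>Fg\<in>set Fgs. Fg xs \<noteq> 0 then Fx xs else 0)"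
proof (induction gs arbitrary: Fgs)
  case (Cons g gs)
  then obtain Fg Fgs' where Fgs: "Fgs = Fg # Fgs'" and "computes g a Fg"
    and "list_all2 (\<lambda>g Fg. computes g a Fg) gs Fgs'"
    by (auto simp: list_all2_Cons1)
  with Cons have "computes (r_guards (g # gs) x) a
    (\<lambda>xs. if Fg xs = 0 then 0 else if \<forall>Fg\<in>set Fgs'. Fg xs \<noteq> 0 then Fx xs else 0)"
    by (simp add: computes_guard)
  then show ?case by (rule computes_cong) (auto simp: Fgs)
qed simp

definition r_mu_step :: "recf \<Rightarrow> nat \<Rightarrow> recf" where
  "r_mu_step c a = (let q = RComp c (map RProj [1..<a + 3]) in
     RComp r_add [RProj 0, RComp r_mul [RComp r_is_zero [RProj 0],
       RComp r_add [RComp r_is_zero [q],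
         RComp r_mul [RComp r_eq [q, r_one], RComp RSucc [RComp RSucc [RProj 1]]]]]])"

text \<open>\<open>clocked f a\<close> takes the arguments of \<open>f\<close> followed by a time bound \<open>t\<close>; every
  \<^const>\<open>RMu\<close> search is cut off after \<open>t\<close> steps, and the clock values of subterms
  are combined so that \<open>0\<close> (``no result yet'') propagates.\<close>
fun clocked :: "recf \<Rightarrow> nat \<Rightarrow> recf" where
  "clocked RZero a = r_one"
| "clocked RSucc a = (if a = 0 then RZero else RComp RSucc [RComp RSucc [RProj 0]])"
| "clocked (RProj i) a = (if i < a then RComp RSucc [RProj i] else RZero)"
| "clocked (RComp f hs) a = r_guards (map (\<lambda>h. clocked h a) hs)
      (RComp (clocked f (length hs)) (map (\<lambda>h. RComp r_pred [clocked h a]) hs @ [RProj a]))"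
| "clocked (RPrim f h) a = (if a = 0 then RZero else
      RPrim (clocked f (a - 1))
        (r_guard (RProj 0) (RComp (clocked h (Suc a)) (RComp r_pred [RProj 0] # map RProj [1..<a + 2]))))"
| "clocked (RMu f) a = RComp r_pred [RComp (RPrim RZero (r_mu_step (clocked f (Suc a)) a))
      (RComp RSucc [RProj a] # map RProj [0..<Suc a])]"

lemma computes_clocked_RComp:
  assumes f: "computes (clocked f (length hs)) (Suc (length hs)) Ff"
    and hs: "\<And>h. h \<in> set hs \<Longrightarrow> computes (clocked h a) (Suc a) (Fh h)"
  shows "computes (clocked (RComp f hs) a) (Suc a) (comp_clock Ff Fh hs a)"
proof -
  have "computes (RComp (clocked f (length hs)) (map (\<lambda>h. RComp r_pred [clocked h a]) hs @ [RProj a]))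
    (Suc a) (\<lambda>zs. Ff (map (\<lambda>h. Fh h zs - 1) hs @ [zs ! a]))"
  proof (rule computes_comp[OF f])
    show "list_all2 (\<lambda>g G. computes g (Suc a) G) (map (\<lambda>h. RComp r_pred [clocked h a]) hs @ [RProj a])
      (map (\<lambda>h zs. Fh h zs - 1) hs @ [\<lambda>zs. zs ! a])"
      by (intro list_all2_appendI computes_map) (rule computesI hs | simp)+
  qed (simp_all add: o_def)
  from computes_guards[OF computes_map[of hs, OF hs] this] show ?thesis
    by (simp add: comp_clock_def[abs_def])
qed

lemma computes_clocked_RPrim:
  assumes f: "computes (clocked f a) (Suc a) Ff"
    and h: "computes (clocked h (Suc (Suc a))) (Suc (Suc (Suc a))) Fh"
  shows "computes (clocked (RPrim f h) (Suc a)) (Suc (Suc a))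
    (\<lambda>zs. prim_rec Ff (prim_clock_step Fh) (hd zs) (tl zs))"
proof -
  have "computes (RComp (clocked h (Suc (Suc a))) (RComp r_pred [RProj 0] # map RProj [1..<Suc a + 2]))
    (Suc (Suc (Suc a))) (\<lambda>zs. Fh ((zs ! 0 - 1) # tl zs))"
  proof (rule computes_comp[OF h])
    show "list_all2 (\<lambda>g G. computes g (Suc (Suc (Suc a))) G)
      (RComp r_pred [RProj 0] # map RProj [1..<Suc a + 2])
      ((\<lambda>zs. zs ! 0 - 1) # map (\<lambda>i zs. zs ! i) [1..<Suc a + 2])"
      by (rule computesI computes_projs | simp del: upt_Suc)+
  qed (auto simp: o_def tl_conv_map_nth)
  then have "computes (r_guard (RProj 0) (RComp (clocked h (Suc (Suc a)))
      (RComp r_pred [RProj 0] # map RProj [1..<Suc a + 2]))) (Suc (Suc (Suc a)))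
    (prim_clock_step Fh)"
    unfolding prim_clock_step_def[abs_def] by (intro computes_guard computes_proj) simp_all
  from computes_prim[OF f this] show ?thesis
    by simp
qed

lemma computes_clocked_RMu:
  assumes f: "computes (clocked f (Suc a)) (Suc (Suc a)) Ff"
  shows "computes (clocked (RMu f) a) (Suc a) (mu_clock Ff a)"
proof -
  have query: "computes (RComp (clocked f (Suc a)) (map RProj [1..<a + 3])) (Suc (Suc (Suc a)))
    (\<lambda>zs. Ff (tl zs))"
    by (rule computes_comp[OF f computes_projs]) (auto simp: o_def tl_conv_map_nth numeral_3_eq_3)
  have "computes (r_mu_step (clocked f (Suc a)) a) (Suc (Suc (Suc a)))
    (\<lambda>zs. zs ! 0 + (if zs ! 0 = 0 then 1 else 0) * ((if Ff (tl zs) = 0 then 1 else 0) +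
       (if Ff (tl zs) = 1 then 1 else 0) * Suc (Suc (zs ! 1))))"
    unfolding r_mu_step_def Let_def by (rule computesI query | simp)+
  then have "computes (RPrim RZero (r_mu_step (clocked f (Suc a)) a)) (Suc (Suc a))
    (\<lambda>zs. mu_scan (\<lambda>j. Ff (j # tl zs)) (hd zs))"
    by (rule computes_prim_rec_eqs[OF computes_zero]) auto
  then have search: "computes (RComp (RPrim RZero (r_mu_step (clocked f (Suc a)) a))
      (RComp RSucc [RProj a] # map RProj [0..<Suc a])) (Suc a)
    (\<lambda>zs. mu_scan (\<lambda>j. Ff (j # zs)) (Suc (zs ! a)))"
  proof (rule computes_comp)
    show "list_all2 (\<lambda>h H. computes h (Suc a) H) (RComp RSucc [RProj a] # map RProj [0..<Suc a])
      ((\<lambda>zs. Suc (zs ! a)) # map (\<lambda>i zs. zs ! i) [0..<Suc a])"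
      by (rule computesI computes_projs | simp del: upt_Suc)+
  qed (simp_all add: o_def map_nth_upt del: upt_Suc)
  show ?thesis
    unfolding clocked.simps mu_clock_def[abs_def] by (rule computesI search | simp)+
qed

theorem clocked_correct: "\<exists>F. computes (clocked f a) (Suc a) F \<and> clock_for f a F"
proof (induction f arbitrary: a)
  case RZero
  have "computes (clocked RZero a) (Suc a) (\<lambda>_. 1)"
    using computes_one by simp
  moreover have "clock_for RZero a (\<lambda>_. 1)"
    by (rule clock_for_total[where G = "\<lambda>_. 0"]) (simp_all add: recf_eval_RZero_iff)
  ultimately show ?case by blast
next
  case RSucc
  have "computes (clocked RSucc a) (Suc a) (\<lambda>zs. if a = 0 then 0 else Suc (Suc (zs ! 0)))"
    by (cases "a = 0") (simp add: computes_zero, simp, (rule computesI | simp)+)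
  moreover have "clock_for RSucc a (\<lambda>zs. if a = 0 then 0 else Suc (Suc (zs ! 0)))"
  proof (cases "a = 0")
    case True
    then show ?thesis by (simp, intro clock_for_diverging) (simp add: recf_eval_RSucc_iff)
  next
    case False
    then show ?thesis
      by (intro clock_for_total[where G = "\<lambda>xs. Suc (xs ! 0)"]) (auto simp: recf_eval_RSucc_iff nth_append)
  qed
  ultimately show ?case by blast
next
  case (RProj i)
  have "computes (clocked (RProj i) a) (Suc a) (\<lambda>zs. if i < a then Suc (zs ! i) else 0)"
  proof (cases "i < a")
    case True
    then show ?thesis by simp (rule computesI | simp)+
  qed (simp add: computes_zero)
  moreover have "clock_for (RProj i) a (\<lambda>zs. if i < a then Suc (zs ! i) else 0)"
  proof (cases "i < a")
    case True
    then show ?thesis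
      by (intro clock_for_total[where G = "\<lambda>xs. xs ! i"]) (auto simp: recf_eval_RProj_iff nth_append)
  qed (simp, intro clock_for_diverging, simp add: recf_eval_RProj_iff)
  ultimately show ?case by blast
next
  case (RComp f hs)
  obtain Ff where "computes (clocked f (length hs)) (Suc (length hs)) Ff" "clock_for f (length hs) Ff"
    using RComp.IH(1) by blast
  moreover have "\<forall>h\<in>set hs. \<exists>F. computes (clocked h a) (Suc a) F \<and> clock_for h a F"
    using RComp.IH(2) by blast
  then obtain Fh where "\<forall>h\<in>set hs. computes (clocked h a) (Suc a) (Fh h) \<and> clock_for h a (Fh h)"
    by (metis bchoice)
  ultimately show ?case
    using computes_clocked_RComp clock_for_RComp by blast
next
  case (RPrim f h)
  show ?case
  proof (cases a)
    case 0
    then have "computes (clocked (RPrim f h) a) (Suc a) (\<lambda>_. 0)" "clock_for (RPrim f h) a (\<lambda>_. 0)"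
      by (simp_all add: computes_zero) (intro clock_for_diverging, simp add: recf_eval_RPrim_Nil)
    then show ?thesis by blast
  next
    case (Suc a')
    from RPrim.IH(1)[of a'] RPrim.IH(2)[of "Suc (Suc a')"] show ?thesis
      unfolding Suc using computes_clocked_RPrim clock_for_RPrim by blast
  qed
next
  case (RMu f)
  from RMu.IH[of "Suc a"] show ?case
    using computes_clocked_RMu clock_for_RMu by blast
qed

section \<open>Computable operations on codes of lists\<close>

definition r_triangle :: recf where
  "r_triangle = RPrim RZero (RComp r_add [RProj 0, RComp RSucc [RProj 1]])"

lemma computes_triangle [computesI]: "computes r_triangle 1 (\<lambda>xs. triangle (xs ! 0))"
  unfolding r_triangle_def by (rule computes_prim_rec_eqs[where a=0]) (rule computesI | simp)+

text \<open>The largest \<open>s\<close> with \<open>triangle s \<le> m\<close>.\<close>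
fun tri_root :: "nat \<Rightarrow> nat" where
  "tri_root 0 = 0"
| "tri_root (Suc m) = tri_root m + (if triangle (tri_root m) + tri_root m \<le> m then 1 else 0)"

lemma tri_root_bounds: "triangle (tri_root m) \<le> m \<and> m \<le> triangle (tri_root m) + tri_root m"
  by (induction m) auto

lemma prod_decode_tri_root:
  "prod_decode m = (m - triangle (tri_root m), tri_root m - (m - triangle (tri_root m)))"
proof -
  have "prod_encode (m - triangle (tri_root m), tri_root m - (m - triangle (tri_root m))) = m"
    using tri_root_bounds[of m] by (simp add: prod_encode_def)
  then show ?thesis by (metis prod_encode_inverse)
qed

definition r_tri_root :: recf where
  "r_tri_root = RPrim RZero
     (RComp r_add [RProj 0, RComp r_le [RComp r_add [RComp r_triangle [RProj 0], RProj 0], RProj 1]])"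

lemma computes_tri_root [computesI]: "computes r_tri_root 1 (\<lambda>xs. tri_root (xs ! 0))"
  unfolding r_tri_root_def by (rule computes_prim_rec_eqs[where a=0]) (rule computesI | simp)+

definition r_fst_decode :: recf where
  "r_fst_decode = RComp r_sub [RProj 0, RComp r_triangle [r_tri_root]]"

lemma computes_fst_decode [computesI]: "computes r_fst_decode 1 (\<lambda>xs. fst (prod_decode (xs ! 0)))"
  unfolding r_fst_decode_def by (rule computesI | simp add: prod_decode_tri_root)+

definition r_snd_decode :: recf where
  "r_snd_decode = RComp r_sub [r_tri_root, r_fst_decode]"

lemma computes_snd_decode [computesI]: "computes r_snd_decode 1 (\<lambda>xs. snd (prod_decode (xs ! 0)))"
  unfolding r_snd_decode_def by (rule computesI | simp add: prod_decode_tri_root)+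

definition r_prod_encode :: recf where
  "r_prod_encode = RComp r_add [RComp r_triangle [r_add], RProj 0]"

lemma computes_prod_encode [computesI]: "computes r_prod_encode 2 (\<lambda>xs. prod_encode (xs ! 0, xs ! 1))"
  unfolding r_prod_encode_def by (rule computesI | simp add: prod_encode_def)+

definition code_hd :: "nat \<Rightarrow> nat" where
  "code_hd c = fst (prod_decode (c - 1))"

definition code_tl :: "nat \<Rightarrow> nat" where
  "code_tl c = snd (prod_decode (c - 1))"

definition code_drop :: "nat \<Rightarrow> nat \<Rightarrow> nat" where
  "code_drop i c = (code_tl ^^ i) c"

definition code_nth :: "nat \<Rightarrow> nat \<Rightarrow> nat" where
  "code_nth i c = code_hd (code_drop i c)"

text \<open>Since \<open>length L \<le> list_encode L\<close>, counting the nonempty suffixes among the first \<open>c\<close>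
  ones gives the length of the list coded by \<open>c\<close>.\<close>
definition code_length :: "nat \<Rightarrow> nat" where
  "code_length c = (\<Sum>j<c. if code_drop j c = 0 then 0 else 1)"

fun code_append_suffix :: "nat \<Rightarrow> nat \<Rightarrow> nat \<Rightarrow> nat" where
  "code_append_suffix 0 c u = u"
| "code_append_suffix (Suc j) c u =
    Suc (prod_encode (code_nth (code_length c - Suc j) c, code_append_suffix j c u))"

definition code_append :: "nat \<Rightarrow> nat \<Rightarrow> nat" where
  "code_append c u = code_append_suffix (code_length c) c u"

lemma prod_decode_0: "prod_decode 0 = (0, 0)"
  using prod_encode_inverse[of "(0, 0)"] by (simp add: prod_encode_def)

lemma code_tl_list_encode: "code_tl (list_encode L) = list_encode (tl L)"
  by (cases L) (auto simp: code_tl_def prod_decode_0)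

lemma code_drop_list_encode: "code_drop i (list_encode L) = list_encode (drop i L)"
  by (induction i) (auto simp: code_drop_def code_tl_list_encode drop_Suc tl_drop)

lemma code_hd_list_encode: "L \<noteq> [] \<Longrightarrow> code_hd (list_encode L) = hd L"
  by (cases L) (auto simp: code_hd_def)

lemma code_nth_list_encode: "i < length L \<Longrightarrow> code_nth i (list_encode L) = L ! i"
  by (simp add: code_nth_def code_drop_list_encode code_hd_list_encode hd_drop_conv_nth)

lemma list_encode_eq_0_iff: "list_encode L = 0 \<longleftrightarrow> L = []"
  by (cases L) auto

lemma length_le_list_encode: "length L \<le> list_encode L"
proof (induction L)
  case (Cons x L)
  then show ?case using le_prod_encode_2[of "list_encode L" x] by simp
qed simp

lemma code_length_list_encode: "code_length (list_encode L) = length L"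
proof -
  have "code_length (list_encode L) = card {j. j < list_encode L \<and> j < length L}"
    by (simp add: code_length_def code_drop_list_encode list_encode_eq_0_iff sum.If_cases Int_def not_le)
  also have "{j. j < list_encode L \<and> j < length L} = {..<length L}"
    using length_le_list_encode[of L] by auto
  finally show ?thesis by simp
qed

lemma code_append_suffix_list_encode:
  "j \<le> length A \<Longrightarrow>
   code_append_suffix j (list_encode A) (list_encode B) = list_encode (drop (length A - j) A @ B)"
proof (induction j)
  case (Suc j)
  then have i: "length A - Suc j < length A" by simp
  have "drop (length A - Suc j) A = A ! (length A - Suc j) # drop (length A - j) A"
    using Cons_nth_drop_Suc[OF i] Suc.prems by (simp add: Suc_diff_Suc)
  with Suc i show ?case by (simp add: code_length_list_encode code_nth_list_encode)
qed simp

lemma code_append_list_encode: "code_append (list_encode A) (list_encode B) = list_encode (A @ B)"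
  by (simp add: code_append_def code_length_list_encode code_append_suffix_list_encode)

definition r_code_tl :: recf where
  "r_code_tl = RComp r_snd_decode [RComp r_pred [RProj 0]]"

lemma computes_code_tl [computesI]: "computes r_code_tl 1 (\<lambda>xs. code_tl (xs ! 0))"
  unfolding r_code_tl_def code_tl_def by (rule computesI | simp)+

definition r_code_drop :: recf where
  "r_code_drop = RPrim (RProj 0) (RComp r_code_tl [RProj 0])"

lemma computes_code_drop [computesI]: "computes r_code_drop 2 (\<lambda>xs. code_drop (xs ! 0) (xs ! 1))"
  unfolding r_code_drop_def code_drop_def
  by (rule computes_prim_rec_eqs[where a=1]) (rule computesI | simp)+

definition r_code_nth :: recf where
  "r_code_nth = RComp r_fst_decode [RComp r_pred [r_code_drop]]"

lemma computes_code_nth [computesI]: "computes r_code_nth 2 (\<lambda>xs. code_nth (xs ! 0) (xs ! 1))"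
  unfolding r_code_nth_def code_nth_def code_hd_def by (rule computesI | simp)+

definition r_code_length :: recf where
  "r_code_length = RComp (RPrim RZero (RComp r_add [RProj 0, RComp r_sgn [RComp r_code_drop [RProj 1, RProj 2]]]))
     [RProj 0, RProj 0]"

lemma computes_code_length [computesI]: "computes r_code_length 1 (\<lambda>xs. code_length (xs ! 0))"
proof -
  have count: "computes (RPrim RZero (RComp r_add [RProj 0, RComp r_sgn [RComp r_code_drop [RProj 1, RProj 2]]])) 2
    (\<lambda>xs. \<Sum>j<xs ! 0. if code_drop j (xs ! 1) = 0 then 0 else 1)"
    by (rule computes_prim_rec_eqs[where a=1]) (rule computesI | simp)+
  show ?thesis
    unfolding r_code_length_def code_length_def by (rule computesI count | simp)+
qed

definition r_code_append :: recf where
  "r_code_append = RComp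
     (RPrim (RProj 1) (RComp RSucc [RComp r_prod_encode
        [RComp r_code_nth [RComp r_sub [RComp r_code_length [RProj 2], RComp RSucc [RProj 1]], RProj 2],
         RProj 0]]))
     [RComp r_code_length [RProj 0], RProj 0, RProj 1]"

lemma computes_code_append [computesI]: "computes r_code_append 2 (\<lambda>xs. code_append (xs ! 0) (xs ! 1))"
proof -
  have suffix: "computes (RPrim (RProj 1) (RComp RSucc [RComp r_prod_encode
        [RComp r_code_nth [RComp r_sub [RComp r_code_length [RProj 2], RComp RSucc [RProj 1]], RProj 2],
         RProj 0]])) 3 (\<lambda>xs. code_append_suffix (xs ! 0) (xs ! 1) (xs ! 2))"
    by (rule computes_prim_rec_eqs[where a=2]) (rule computesI | simp)+
  show ?thesis
    unfolding r_code_append_def code_append_def by (rule computesI suffix | simp)+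
qed

section \<open>Recognising codes of freely reduced words\<close>

definition letter_code :: "bool \<times> nat \<Rightarrow> nat" where
  "letter_code x = prod_encode (if fst x then 1 else 0, snd x)"

lemma word_code_eq: "word_code w = list_encode (map letter_code w)"
  unfolding word_code_def letter_code_def by (metis (mono_tags) case_prod_beta)

lemma inj_letter_code: "inj letter_code"
  unfolding letter_code_def inj_def by (auto dest!: inj_prod_encode[THEN injD] split: if_splits)

definition letter_defect :: "nat \<Rightarrow> nat \<Rightarrow> nat \<Rightarrow> nat" where
  "letter_defect n i v =
     (if i < code_length v then
        (if fst (prod_decode (code_nth i v)) \<le> 1 \<and> snd (prod_decode (code_nth i v)) < n then 0 else 1) +
        (if Suc i < code_length v
            \<and> snd (prod_decode (code_nth i v)) = snd (prod_decode (code_nth (Suc i) v))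
            \<and> fst (prod_decode (code_nth i v)) \<noteq> fst (prod_decode (code_nth (Suc i) v)) then 1 else 0)
      else 0)"

definition r_letter_defect :: "nat \<Rightarrow> recf" where
  "r_letter_defect n =
    (let x = r_code_nth; y = RComp r_code_nth [RComp RSucc [RProj 0], RProj 1];
         len = RComp r_code_length [RProj 1] in
     RComp r_mul [RComp r_lt [RProj 0, len],
       RComp r_add [
         RComp r_sgn [RComp r_add [RComp r_sgn [RComp r_sub [RComp r_fst_decode [x], r_one]],
           RComp r_is_zero [RComp r_sub [r_const n, RComp r_snd_decode [x]]]]],
         RComp r_mul [RComp r_lt [RComp RSucc [RProj 0], len],
           RComp r_mul [RComp r_eq [RComp r_snd_decode [x], RComp r_snd_decode [y]],
             RComp r_is_zero [RComp r_eq [RComp r_fst_decode [x], RComp r_fst_decode [y]]]]]]])"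

lemma computes_letter_defect [computesI]:
  "computes (r_letter_defect n) 2 (\<lambda>xs. letter_defect n (xs ! 0) (xs ! 1))"
  unfolding r_letter_defect_def Let_def letter_defect_def by (rule computesI | simp)+

definition word_code_defect :: "nat \<Rightarrow> nat \<Rightarrow> nat" where
  "word_code_defect n v = (\<Sum>i<v. letter_defect n i v)"

definition r_word_code_defect :: "nat \<Rightarrow> recf" where
  "r_word_code_defect n = RComp (RPrim RZero (RComp r_add [RProj 0, RComp (r_letter_defect n) [RProj 1, RProj 2]]))
     [RProj 0, RProj 0]"

lemma computes_word_code_defect [computesI]:
  "computes (r_word_code_defect n) 1 (\<lambda>xs. word_code_defect n (xs ! 0))"
proof -
  have sum: "computes (RPrim RZero (RComp r_add [RProj 0, RComp (r_letter_defect n) [RProj 1, RProj 2]])) 2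
    (\<lambda>xs. \<Sum>i<xs ! 0. letter_defect n i (xs ! 1))"
    by (rule computes_prim_rec_eqs[where a=1]) (rule computesI | simp)+
  show ?thesis
    unfolding r_word_code_defect_def word_code_defect_def by (rule computesI sum | simp)+
qed

definition reduced_letter_codes :: "nat \<Rightarrow> nat list \<Rightarrow> bool" where
  "reduced_letter_codes n L \<longleftrightarrow>
     (\<forall>i<length L. fst (prod_decode (L ! i)) \<le> 1 \<and> snd (prod_decode (L ! i)) < n) \<and>
     (\<forall>i. Suc i < length L \<longrightarrow> \<not> (snd (prod_decode (L ! i)) = snd (prod_decode (L ! Suc i))
         \<and> fst (prod_decode (L ! i)) \<noteq> fst (prod_decode (L ! Suc i))))"

lemma word_code_defect_list_encode:
  "word_code_defect n (list_encode L) = 0 \<longleftrightarrow> reduced_letter_codes n L"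
proof -
  let ?v = "list_encode L"
  have "word_code_defect n ?v = 0 \<longleftrightarrow> (\<forall>i<?v. letter_defect n i ?v = 0)"
    by (auto simp: word_code_defect_def)
  also have "\<dots> \<longleftrightarrow> (\<forall>i<length L. letter_defect n i ?v = 0)"
    using length_le_list_encode[of L]
    by (auto simp: letter_defect_def code_length_list_encode simp del: list_encode.simps)
  also have "\<dots> \<longleftrightarrow> reduced_letter_codes n L"
  proof -
    have "letter_defect n i ?v = 0 \<longleftrightarrow>
      (fst (prod_decode (L ! i)) \<le> 1 \<and> snd (prod_decode (L ! i)) < n) \<and>
      (Suc i < length L \<longrightarrow> \<not> (snd (prod_decode (L ! i)) = snd (prod_decode (L ! Suc i))
         \<and> fst (prod_decode (L ! i)) \<noteq> fst (prod_decode (L ! Suc i))))" if "i < length L" for i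
      using that by (auto simp: letter_defect_def code_length_list_encode code_nth_list_encode
          simp del: list_encode.simps)
    then show ?thesis
      unfolding reduced_letter_codes_def by (auto simp: Suc_lessD)
  qed
  finally show ?thesis .
qed

lemma reduced_letter_codes_iff:
  "reduced_letter_codes n L \<longleftrightarrow> (\<exists>w\<in>free_words n. L = map letter_code w)"
proof
  assume codes: "reduced_letter_codes n L"
  define w where "w = map (\<lambda>c. (fst (prod_decode c) = 1, snd (prod_decode c))) L"
  have "map letter_code w = L"
  proof (rule nth_equalityI)
    fix i assume "i < length (map letter_code w)"
    with codes have "i < length L" "fst (prod_decode (L ! i)) \<le> 1"
      by (auto simp: w_def reduced_letter_codes_def)
    then show "map letter_code w ! i = L ! i"
      using prod_decode_inverse[of "L ! i"]
      by (cases "prod_decode (L ! i)") (auto simp: w_def letter_code_def le_Suc_eq)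
  qed (simp add: w_def)
  moreover have "w \<in> free_words n"
    using codes unfolding free_words_def freely_reduced_def reduced_letter_codes_def
    by (auto simp: w_def in_set_conv_nth le_Suc_eq)
  ultimately show "\<exists>w\<in>free_words n. L = map letter_code w" by auto
next
  assume "\<exists>w\<in>free_words n. L = map letter_code w"
  then obtain w where "w \<in> free_words n" and L: "L = map letter_code w" by auto
  have "snd (w ! i) < n" if "i < length w" for i
    using nth_mem[OF that] \<open>w \<in> free_words n\<close> by (auto simp: free_words_def image_subset_iff)
  with \<open>w \<in> free_words n\<close> show "reduced_letter_codes n L"
    by (auto simp: L reduced_letter_codes_def letter_code_def free_words_def freely_reduced_def)
qed

lemma word_code_defect_eq_0_iff: "word_code_defect n c = 0 \<longleftrightarrow> (\<exists>w\<in>free_words n. c = word_code w)"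
  using word_code_defect_list_encode[of n "list_decode c"] reduced_letter_codes_iff[of n "list_decode c"]
  by (metis list_decode_inverse list_encode_inverse word_code_eq)

section \<open>Freely reduced words and generic sets\<close>

definition cancelling :: "bool \<times> nat \<Rightarrow> bool \<times> nat \<Rightarrow> bool" where
  "cancelling x y \<longleftrightarrow> snd x = snd y \<and> fst x \<noteq> fst y"

lemma freely_reduced_Nil [simp]: "freely_reduced []"
  by (simp add: freely_reduced_def)

lemma freely_reduced_Cons:
  "freely_reduced (x # w) \<longleftrightarrow> (w \<noteq> [] \<longrightarrow> \<not> cancelling x (hd w)) \<and> freely_reduced w"
proof
  assume red: "freely_reduced (x # w)"
  have "w \<noteq> [] \<longrightarrow> \<not> cancelling x (hd w)"
    using red[unfolded freely_reduced_def, rule_format, of 0] by (cases w) (auto simp: cancelling_def)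
  moreover have "freely_reduced w"
    unfolding freely_reduced_def
    using red[unfolded freely_reduced_def, rule_format, of "Suc _"] by simp
  ultimately show "(w \<noteq> [] \<longrightarrow> \<not> cancelling x (hd w)) \<and> freely_reduced w" by simp
next
  assume "(w \<noteq> [] \<longrightarrow> \<not> cancelling x (hd w)) \<and> freely_reduced w"
  then show "freely_reduced (x # w)"
    unfolding freely_reduced_def
    by (auto simp: cancelling_def nth_Cons split: nat.split) (cases w; simp)+
qed

lemma freely_reduced_append:
  "freely_reduced (v @ w) \<longleftrightarrow>
     freely_reduced v \<and> freely_reduced w \<and> (v \<noteq> [] \<and> w \<noteq> [] \<longrightarrow> \<not> cancelling (last v) (hd w))"
proof (induction v)
  case (Cons x v)
  then show ?case by (cases "v = []") (auto simp: freely_reduced_Cons)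
qed simp

lemma free_words_append_iff:
  "v @ w \<in> free_words n \<longleftrightarrow>
     v \<in> free_words n \<and> w \<in> free_words n \<and> (v \<noteq> [] \<and> w \<noteq> [] \<longrightarrow> \<not> cancelling (last v) (hd w))"
  by (auto simp: free_words_def freely_reduced_append)

lemma free_words_take: "w \<in> free_words n \<Longrightarrow> take k w \<in> free_words n"
  using free_words_append_iff[of "take k w" "drop k w"] by simp

definition flip_letter :: "nat \<Rightarrow> bool \<times> nat \<Rightarrow> bool \<times> nat" where
  "flip_letter i x = (if snd x = i then \<not> fst x else fst x, snd x)"

lemma flip_letter_flip_letter [simp]: "flip_letter i (flip_letter i x) = x"
  by (cases x) (simp add: flip_letter_def)

lemma snd_flip_letter [simp]: "snd (flip_letter i x) = snd x"
  by (simp add: flip_letter_def)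

lemma cancelling_flip_letter [simp]: "cancelling (flip_letter i x) (flip_letter i y) = cancelling x y"
  by (auto simp: flip_letter_def cancelling_def)

lemma free_words_map_flip_letter: "map (flip_letter i) w \<in> free_words n \<longleftrightarrow> w \<in> free_words n"
proof -
  have "freely_reduced (map (flip_letter i) w) = freely_reduced w"
    by (induction w) (auto simp: freely_reduced_Cons hd_map)
  moreover have "set (map snd (map (flip_letter i) w)) = set (map snd w)"
    by (induction w) auto
  ultimately show ?thesis by (simp only: free_words_def mem_Collect_eq)
qed

lemma inj_map_flip_letter: "inj (map (flip_letter i))"
  by (rule injI) (metis flip_letter_flip_letter map_map comp_def map_idI)

lemma ball_words_subset_lists: "ball_words n k \<subseteq> {w :: fword. set w \<subseteq> UNIV \<times> {..<n} \<and> length w \<le> k}"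
  by (auto simp: ball_words_def free_words_def)

lemma finite_ball_words: "finite (ball_words n k)"
  by (rule finite_subset[OF ball_words_subset_lists finite_lists_length_le]) simp

lemma card_ball_words_pos: "0 < card (ball_words n k)"
proof -
  have "[] \<in> ball_words n k" by (simp add: ball_words_def free_words_def)
  then show ?thesis using finite_ball_words card_gt_0_iff by blast
qed

lemma card_ball_words_add_le:
  "card (ball_words n (k + m)) \<le> card (ball_words n k) * card {w :: fword. set w \<subseteq> UNIV \<times> {..<n} \<and> length w \<le> m}"
proof -
  let ?L = "{w :: fword. set w \<subseteq> UNIV \<times> {..<n} \<and> length w \<le> m}"
  have "inj_on (\<lambda>w. (take k w, drop k w)) (ball_words n (k + m))"
    by (rule inj_onI) (metis append_take_drop_id prod.inject)
  moreover have "(\<lambda>w. (take k w, drop k w)) ` ball_words n (k + m) \<subseteq> ball_words n k \<times> ?L"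
    using ball_words_subset_lists[of n "k + m"]
    by (auto simp: ball_words_def free_words_take dest: in_set_dropD)
  moreover have "finite (ball_words n k \<times> ?L)"
    by (rule finite_cartesian_product[OF finite_ball_words finite_lists_length_le]) simp
  ultimately have "card (ball_words n (k + m)) \<le> card (ball_words n k \<times> ?L)"
    by (rule card_inj_on_le)
  then show ?thesis by (simp add: card_cartesian_product)
qed

text \<open>At least half of every ball extends a given reduced word \<open>w\<close> without cancellation:
  inverting the generator of the last letter of \<open>w\<close> maps the other words of the ball
  injectively to such extensions.\<close>
lemma card_ball_words_le_extensions:
  assumes w: "w \<in> free_words n"
  shows "card (ball_words n k) \<le> 2 * card {u \<in> ball_words n k. w @ u \<in> free_words n}"
proof -
  let ?B = "ball_words n k" and ?A = "{u \<in> ball_words n k. w @ u \<in> free_words n}"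
  have "card (?B - ?A) \<le> card ?A"
  proof (cases "w = []")
    case True
    with w have "?B - ?A = {}" by (auto simp: ball_words_def)
    then show ?thesis by (metis card.empty zero_le)
  next
    case False
    let ?flip = "map (flip_letter (snd (last w)))"
    have "inj_on ?flip (?B - ?A)"
      by (rule inj_on_subset[OF inj_map_flip_letter]) simp
    moreover have "?flip ` (?B - ?A) \<subseteq> ?A"
    proof
      fix v assume "v \<in> ?flip ` (?B - ?A)"
      then obtain u where u: "u \<in> ?B" "w @ u \<notin> free_words n" and v: "v = ?flip u" by auto
      then have u_free: "u \<in> free_words n" by (simp add: ball_words_def)
      with u w False have "u \<noteq> []" and "cancelling (last w) (hd u)"
        by (auto simp: free_words_append_iff)
      then have "\<not> cancelling (last w) (hd v)"
        by (auto simp: v hd_map cancelling_def flip_letter_def)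
      with u u_free w \<open>u \<noteq> []\<close> show "v \<in> ?A"
        by (auto simp: v ball_words_def free_words_map_flip_letter free_words_append_iff)
    qed
    ultimately show ?thesis
      by (rule card_inj_on_le) (rule finite_subset[OF _ finite_ball_words], auto)
  qed
  moreover have "card ?B = card ?A + card (?B - ?A)"
  proof -
    have "?A \<subseteq> ?B" by auto
    then show ?thesis
      using card_Diff_subset[of ?A ?B] card_mono[OF finite_ball_words[of n k], of ?A]
        finite_subset[OF _ finite_ball_words[of n k], of ?A] by simp
  qed
  ultimately show ?thesis by simp
qed

lemma negligible_shift:
  assumes "negligible n C"
  shows "(\<lambda>k. real (card (C \<inter> ball_words n (k + m))) / real (card (ball_words n k))) \<longlonglongrightarrow> 0"
proof -
  define K where "K = card {w :: fword. set w \<subseteq> UNIV \<times> {..<n} \<and> length w \<le> m}"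
  define e where "e k = real (card (C \<inter> ball_words n k)) / real (card (ball_words n k))" for k
  have bound: "real (card (C \<inter> ball_words n (k + m))) / real (card (ball_words n k)) \<le> K * e (k + m)"
    for k
  proof -
    have pos: "0 < real (card (ball_words n k))" "0 < real (card (ball_words n (k + m)))"
      using card_ball_words_pos by simp_all
    have "card (ball_words n (k + m)) \<le> K * card (ball_words n k)"
      using card_ball_words_add_le[of n k m] by (simp add: K_def mult.commute)
    then have "real (card (ball_words n (k + m))) \<le> real K * real (card (ball_words n k))"
      by (metis of_nat_le_iff of_nat_mult)
    then have "e (k + m) * real (card (ball_words n (k + m))) \<le> e (k + m) * (real K * real (card (ball_words n k)))"
      by (rule mult_left_mono) (simp add: e_def)
    also have "e (k + m) * real (card (ball_words n (k + m))) = real (card (C \<inter> ball_words n (k + m)))"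
      using pos(2) by (simp add: e_def)
    finally show ?thesis
      using pos(1) by (simp add: pos_divide_le_eq mult_ac)
  qed
  have "e \<longlonglongrightarrow> 0"
    using assms by (simp add: negligible_def e_def[abs_def])
  then have "(\<lambda>k. K * e (k + m)) \<longlonglongrightarrow> 0"
    by (intro tendsto_mult_right_zero LIMSEQ_ignore_initial_segment)
  then show ?thesis
    by (rule real_tendsto_sandwich[OF always_eventually always_eventually tendsto_const, rotated 2])
      (simp_all add: bound)
qed

text \<open>If no \<open>u \<in> S\<close> had \<open>w @ u \<in> S\<close>, then for each of the at least half of all \<open>u\<close> that
  extend \<open>w\<close>, either \<open>u\<close> or \<open>w @ u\<close> would lie in the negligible complement of \<open>S\<close>.\<close>
lemma generic_extends:
  assumes gen: "generic n S" and w: "w \<in> free_words n"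
  shows "\<exists>u\<in>S. w @ u \<in> S"
proof (rule ccontr)
  assume none: "\<not> (\<exists>u\<in>S. w @ u \<in> S)"
  define C where "C = free_words n - S"
  have neg: "negligible n C" using gen by (simp add: generic_def C_def)
  have le: "card (ball_words n k) \<le>
    2 * (card (C \<inter> ball_words n k) + card (C \<inter> ball_words n (k + length w)))" for k
  proof -
    let ?A = "{u \<in> ball_words n k. w @ u \<in> free_words n}"
    have "card (S \<inter> ?A) \<le> card (C \<inter> ball_words n (k + length w))"
    proof (rule card_inj_on_le)
      show "inj_on ((@) w) (S \<inter> ?A)" by (rule inj_onI) simp
      show "(@) w ` (S \<inter> ?A) \<subseteq> C \<inter> ball_words n (k + length w)"
        using none by (auto simp: C_def ball_words_def)
    qed (simp add: finite_ball_words)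
    moreover have "card ?A \<le> card (S \<inter> ?A) + card (C \<inter> ball_words n k)"
    proof -
      have "?A \<subseteq> (S \<inter> ?A) \<union> (C \<inter> ball_words n k)" by (auto simp: C_def ball_words_def)
      then have "card ?A \<le> card ((S \<inter> ?A) \<union> (C \<inter> ball_words n k))"
        by (rule card_mono[rotated]) (simp add: finite_ball_words)
      then show ?thesis using card_Un_le le_trans by blast
    qed
    ultimately have "card ?A \<le> card (C \<inter> ball_words n k) + card (C \<inter> ball_words n (k + length w))"
      by linarith
    with card_ball_words_le_extensions[OF w, of k] show ?thesis by (meson le_trans mult_le_mono2)
  qed
  define e where "e k = real (card (C \<inter> ball_words n k)) / real (card (ball_words n k))
    + real (card (C \<inter> ball_words n (k + length w))) / real (card (ball_words n k))" for k
  have "1 \<le> 2 * e k" for k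
  proof -
    have "real (card (ball_words n k)) \<le>
      real (2 * (card (C \<inter> ball_words n k) + card (C \<inter> ball_words n (k + length w))))"
      using le[of k] by (simp only: of_nat_le_iff)
    then show ?thesis
      using card_ball_words_pos[of n k] by (simp add: e_def field_simps)
  qed
  moreover have "(\<lambda>k. 2 * e k) \<longlonglongrightarrow> 2 * (0 + 0)"
    unfolding e_def using neg negligible_shift[OF neg, of "length w"]
    by (intro tendsto_intros) (simp_all add: negligible_def)
  ultimately show False
    by (metis (no_types) LIMSEQ_le_const add_0 mult_zero_right not_one_le_zero)
qed

section \<open>Solving the Word Problem by dovetailing\<close>

lemma code_append_word_code: "code_append (word_code v) (word_code w) = word_code (v @ w)"
  by (simp add: word_code_eq code_append_list_encode)

lemma code_append_word_code_eq_word_code: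
  assumes "code_append (word_code v) c = word_code x"
  shows "\<exists>w. x = v @ w \<and> c = word_code w"
proof -
  define L where "L = list_decode c"
  have "list_encode (map letter_code v @ L) = list_encode (map letter_code x)"
    using assms code_append_list_encode[of "map letter_code v" L] by (simp add: L_def word_code_eq)
  then have "map letter_code v @ L = map letter_code x"
    by (simp only: list_encode_eq)
  then have "x = v @ drop (length v) x" and "L = map letter_code (drop (length v) x)"
    using inj_letter_code
    by (metis append_eq_conv_conj append_take_drop_id drop_map inj_map_eq_map length_map take_map)+
  then show ?thesis
    by (metis L_def list_decode_inverse word_code_eq)
qed

definition search_result :: "(nat list \<Rightarrow> nat) \<Rightarrow> nat \<Rightarrow> nat \<Rightarrow> nat" where
  "search_result F c p = F [code_append c (fst (prod_decode p)), fst (prod_decode p), snd (prod_decode p)]"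

definition search_defect :: "nat \<Rightarrow> (nat list \<Rightarrow> nat) \<Rightarrow> nat \<Rightarrow> nat \<Rightarrow> nat" where
  "search_defect n F c p =
     word_code_defect n (code_append c (fst (prod_decode p))) + (if search_result F c p = 0 then 1 else 0)"

definition r_search_result :: "recf \<Rightarrow> recf" where
  "r_search_result h = RComp h [RComp r_code_append [RProj 1, RComp r_fst_decode [RProj 0]],
     RComp r_fst_decode [RProj 0], RComp r_snd_decode [RProj 0]]"

definition r_search_defect :: "nat \<Rightarrow> recf \<Rightarrow> recf" where
  "r_search_defect n h = RComp r_add [RComp (r_word_code_defect n)
     [RComp r_code_append [RProj 1, RComp r_fst_decode [RProj 0]]], RComp r_is_zero [r_search_result h]]"

lemma computes_search_result:
  "computes h 3 F \<Longrightarrow> computes (r_search_result h) 2 (\<lambda>xs. search_result F (xs ! 1) (xs ! 0))"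
  unfolding r_search_result_def search_result_def by (rule computesI | assumption | simp)+

lemma computes_search_defect:
  "computes h 3 F \<Longrightarrow> computes (r_search_defect n h) 2 (\<lambda>xs. search_defect n F (xs ! 1) (xs ! 0))"
  unfolding r_search_defect_def search_defect_def by (rule computesI computes_search_result | assumption | simp)+

text \<open>On the code \<open>c\<close> of \<open>w\<close>, search for the least \<open>p = prod_encode (u, t)\<close> such that
  \<open>code_append c u\<close> codes a reduced word \<open>w @ u\<close> and \<open>f\<close> halts on \<open>(w @ u, u)\<close> within
  time \<open>t\<close>; return that result of \<open>f\<close>.\<close>
definition r_wp_search :: "nat \<Rightarrow> recf \<Rightarrow> recf" where
  "r_wp_search n f = RComp (RComp r_pred [r_search_result (clocked f 2)])
     [RMu (r_search_defect n (clocked f 2)), RProj 0]"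

lemma recf_eval_wp_search_iff:
  assumes F: "computes (clocked f 2) 3 F"
  shows "recf_eval (r_wp_search n f) [c] y \<longleftrightarrow>
    (\<exists>p. search_defect n F c p = 0 \<and> (\<forall>m<p. search_defect n F c m \<noteq> 0) \<and> y = search_result F c p - 1)"
proof -
  have result: "computes (RComp r_pred [r_search_result (clocked f 2)]) 2 (\<lambda>xs. search_result F (xs ! 1) (xs ! 0) - 1)"
    by (rule computesI computes_search_result[OF F] | simp)+
  have search: "recf_eval (RMu (r_search_defect n (clocked f 2))) [c] p \<longleftrightarrow>
    search_defect n F c p = 0 \<and> (\<forall>m<p. search_defect n F c m \<noteq> 0)" for p
    using recf_eval_RMu_computes_iff[OF computes_search_defect[OF F]] by simp
  have "recf_eval (r_wp_search n f) [c] y \<longleftrightarrow>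
    (\<exists>p. recf_eval (RMu (r_search_defect n (clocked f 2))) [c] p \<and>
      recf_eval (RComp r_pred [r_search_result (clocked f 2)]) [p, c] y)"
    unfolding r_wp_search_def recf_eval_RComp_iff[of _ "[_, _]"]
    by (auto simp: list_all2_Cons1 recf_eval_RProj_iff)
  also have "\<dots> \<longleftrightarrow>
    (\<exists>p. search_defect n F c p = 0 \<and> (\<forall>m<p. search_defect n F c m \<noteq> 0) \<and> y = search_result F c p - 1)"
    using search computes_unique[OF result, of "[_, c]"] computesD[OF result, of "[_, c]"] by auto
  finally show ?thesis .
qed

lemma clocked_correct_binary:
  obtains F where "computes (clocked f 2) 3 F" and "clock_for f 2 F"
  using clocked_correct[of f 2] by (auto simp: numeral_3_eq_3 numeral_2_eq_2)

lemma wp_search_halts: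
  assumes wu: "w @ u \<in> free_words n" and f: "recf_eval f [word_code (w @ u), word_code u] y"
  shows "\<exists>z. recf_eval (r_wp_search n f) [word_code w] z"
proof -
  obtain F where F: "computes (clocked f 2) 3 F" and clock: "clock_for f 2 F"
    by (rule clocked_correct_binary)
  have "\<forall>\<^sub>F t in sequentially. F ([word_code (w @ u), word_code u] @ [t]) = Suc y"
    by (rule clock_for_complete[OF clock _ f]) simp
  then obtain t where t: "F [word_code (w @ u), word_code u, t] = Suc y"
    by (auto simp: eventually_sequentially)
  have "search_defect n F (word_code w) (prod_encode (word_code u, t)) = 0"
    using wu t by (auto simp: search_defect_def search_result_def code_append_word_code word_code_defect_eq_0_iff)
  then have "\<exists>p. search_defect n F (word_code w) p = 0 \<and> (\<forall>m<p. search_defect n F (word_code w) m \<noteq> 0)"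
    using exists_least_iff[of "\<lambda>p. search_defect n F (word_code w) p = 0"] by blast
  then show ?thesis
    unfolding recf_eval_wp_search_iff[OF F] by blast
qed

lemma wp_search_sound:
  assumes "recf_eval (r_wp_search n f) [word_code w] y"
  shows "\<exists>u. w @ u \<in> free_words n \<and> recf_eval f [word_code (w @ u), word_code u] y"
proof -
  obtain F where F: "computes (clocked f 2) 3 F" and clock: "clock_for f 2 F"
    by (rule clocked_correct_binary)
  from assms obtain p where defect: "search_defect n F (word_code w) p = 0"
    and y: "y = search_result F (word_code w) p - 1"
    unfolding recf_eval_wp_search_iff[OF F] by blast
  define c where "c = fst (prod_decode p)"
  from defect obtain x where x: "x \<in> free_words n" "code_append (word_code w) c = word_code x"
    and halted: "search_result F (word_code w) p \<noteq> 0"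
    by (auto simp: search_defect_def c_def word_code_defect_eq_0_iff split: if_splits)
  obtain u where u: "x = w @ u" "c = word_code u"
    using code_append_word_code_eq_word_code[OF x(2)] by blast
  have "recf_eval f [word_code x, c] y"
    using clock_for_sound[OF clock, of "[word_code x, c]" "snd (prod_decode p)"] halted x(2)
    by (simp add: y search_result_def c_def)
  with x(1) u show ?thesis by blast
qed

section \<open>Evaluating words in the group\<close>

lemma word_eval_Nil: "word_eval G g [] = \<one>\<^bsub>G\<^esub>"
  by (simp add: word_eval_def)

lemma word_eval_Cons:
  "word_eval G g (x # w) = (if fst x then g (snd x) else inv\<^bsub>G\<^esub> g (snd x)) \<otimes>\<^bsub>G\<^esub> word_eval G g w"
  by (simp add: word_eval_def split: prod.split)

lemma (in group) word_eval_closed: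
  "g ` snd ` set w \<subseteq> carrier G \<Longrightarrow> word_eval G g w \<in> carrier G"
  by (induction w) (auto simp: word_eval_Nil word_eval_Cons)

lemma (in group) word_eval_append:
  assumes "g ` snd ` set v \<subseteq> carrier G" and "g ` snd ` set w \<subseteq> carrier G"
  shows "word_eval G g (v @ w) = word_eval G g v \<otimes> word_eval G g w"
  using assms by (induction v) (auto simp: word_eval_Nil word_eval_Cons word_eval_closed m_assoc)

lemma (in group) word_eval_append_eq_iff:
  assumes "g ` snd ` set v \<subseteq> carrier G" and "g ` snd ` set w \<subseteq> carrier G"
  shows "word_eval G g (v @ w) = word_eval G g w \<longleftrightarrow> word_eval G g v = \<one>"
  using assms by (simp add: word_eval_append word_eval_closed)

lemma (in group) wp_search_correct:
  assumes gens: "g ` {..<n} \<subseteq> carrier G"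
    and correct: "\<forall>w1\<in>free_words n. \<forall>w2\<in>free_words n. \<forall>y. recf_eval f [word_code w1, word_code w2] y \<longrightarrow>
      (y = 0 \<longleftrightarrow> word_eval G g w1 = word_eval G g w2)"
    and "recf_eval (r_wp_search n f) [word_code w] y"
  shows "y = 0 \<longleftrightarrow> word_eval G g w = \<one>"
proof -
  obtain u where wu: "w @ u \<in> free_words n" and "recf_eval f [word_code (w @ u), word_code u] y"
    using wp_search_sound[OF assms(3)] by blast
  moreover have "u \<in> free_words n" and "w \<in> free_words n"
    using wu by (simp_all add: free_words_append_iff)
  moreover have "g ` snd ` set v \<subseteq> carrier G" if "v \<in> free_words n" for v
    using that gens by (auto simp: free_words_def)
  ultimately show ?thesis
    using correct by (simp add: word_eval_append_eq_iff)
qed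

theorem theoremA:
  fixes G :: "('g, 'b) monoid_scheme" and n :: nat and g :: "nat \<Rightarrow> 'g"
    and S :: "fword set"
  assumes "group G"
    and "fin_gen_set G n g"
    and "generic n S"
    and "EP_solvable_on G n g (S \<times> S)"
  shows "WP_solvable_on G n g (free_words n)"
proof -
  from assms(4) obtain f where halts: "\<forall>(w1, w2)\<in>S \<times> S. \<exists>y. recf_eval f [word_code w1, word_code w2] y"
    and correct: "\<forall>w1\<in>free_words n. \<forall>w2\<in>free_words n. \<forall>y. recf_eval f [word_code w1, word_code w2] y \<longrightarrow>
      (y = 0 \<longleftrightarrow> word_eval G g w1 = word_eval G g w2)"
    unfolding EP_solvable_on_def by blast
  have "\<exists>y. recf_eval (r_wp_search n f) [word_code w] y" if w: "w \<in> free_words n" for w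
  proof -
    obtain u where "u \<in> S" and "w @ u \<in> S"
      using generic_extends[OF assms(3) w] by blast
    with halts assms(3) show ?thesis
      by (force simp: generic_def intro: wp_search_halts)
  qed
  moreover have "g ` {..<n} \<subseteq> carrier G"
    using assms(2) by (simp add: fin_gen_set_def)
  ultimately show ?thesis
    unfolding WP_solvable_on_def using group.wp_search_correct[OF assms(1) _ correct] by blast
qed

end
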